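(* Let $G$ be a complete edge-colored graph such that for each strong module $M$ of $G$ the quotient graph $G[M]/\mathbb{P}_{\max}(M)$ is a complete edge-colored permutation graph. Then $G$ is a complete edge-colored permutation graph.
   Context: A complete $k$-edge-colored graph $G=(V,E_1,\dots,E_k)$ is the complete graph on a finite set $V$ with edges partitioned into $k$ nonempty color classes $E_i$ (the one-vertex graph also counts); $G_{|i}=(V,E_i)$. A labeling is a bijection $\ell:V\to\{1,\dots,|V|\}$. A graph $(V,E)$ with labeling $\ell$ is a simple permutation graph of a permutation $\pi$ if for all $u,v$ with $\ell(u)>\ell(v)$: $\{u,v\}\in E$ iff $\pi^{-1}(\ell(u))<\pi^{-1}(\ell(v))$. $G$ is a complete edge-colored permutation graph if there exist a labeling $\ell$ and permutations $\pi_1,\dots,\pi_k$ with $(G_{|i},\ell)$ a simple permutation graph of $\pi_i$ for all $i$. A module is a set $M\subseteq V$ such that for every $v\notin M$ all edges $\{u,v\}$, $u\in M$, have the same color; a strong module is a nonempty module comparable by inclusion or disjoint with every other module. For a strong module $M$ with $|M|\ge2$, $\mathbb{P}_{\max}(M)$ is the set of inclusion-maximal strong modules properly contained in $M$, and $G[M]/\mathbb{P}_{\max}(M)$ is the complete graph on $\mathbb{P}_{\max}(M)$ with $\{M_a,M_b\}$ colored by the common color of all edges between $M_a$ and $M_b$; for $|M|=1$ it is the one-vertex graph. *)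

theory Defs
  imports Main "HOL-Combinatorics.Permutations"
begin

definition complete_edge_colored :: "'a set \<Rightarrow> ('a \<Rightarrow> 'a \<Rightarrow> 'c) \<Rightarrow> bool" where
  "complete_edge_colored V c \<longleftrightarrow> finite V \<and> V \<noteq> {} \<and>
     (\<forall>u\<in>V. \<forall>v\<in>V. u \<noteq> v \<longrightarrow> c u v = c v u)"

definition colors :: "'a set \<Rightarrow> ('a \<Rightarrow> 'a \<Rightarrow> 'c) \<Rightarrow> 'c set" where
  "colors V c = {c u v | u v. u \<in> V \<and> v \<in> V \<and> u \<noteq> v}"

definition simple_perm_graph ::
  "'a set \<Rightarrow> ('a \<Rightarrow> 'a \<Rightarrow> bool) \<Rightarrow> ('a \<Rightarrow> nat) \<Rightarrow> (nat \<Rightarrow> nat) \<Rightarrow> bool" where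
  "simple_perm_graph V E l \<pi> \<longleftrightarrow>
     (\<forall>u\<in>V. \<forall>v\<in>V. l u > l v \<longrightarrow> (E u v \<longleftrightarrow> inv \<pi> (l u) < inv \<pi> (l v)))"

definition ce_perm_graph :: "'a set \<Rightarrow> ('a \<Rightarrow> 'a \<Rightarrow> 'c) \<Rightarrow> bool" where
  "ce_perm_graph V c \<longleftrightarrow>
     (\<exists>l. bij_betw l V {1..card V} \<and>
        (\<forall>i\<in>colors V c. \<exists>\<pi>. \<pi> permutes {1..card V} \<and>
            simple_perm_graph V (\<lambda>u v. c u v = i) l \<pi>))"

definition is_module :: "'a set \<Rightarrow> ('a \<Rightarrow> 'a \<Rightarrow> 'c) \<Rightarrow> 'a set \<Rightarrow> bool" where
  "is_module V c M \<longleftrightarrow> M \<subseteq> V \<and>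
     (\<forall>v\<in>V - M. \<forall>u\<in>M. \<forall>u'\<in>M. c u v = c u' v)"

definition strong_module :: "'a set \<Rightarrow> ('a \<Rightarrow> 'a \<Rightarrow> 'c) \<Rightarrow> 'a set \<Rightarrow> bool" where
  "strong_module V c M \<longleftrightarrow> M \<noteq> {} \<and> is_module V c M \<and>
     (\<forall>M'. is_module V c M' \<longrightarrow> M \<subseteq> M' \<or> M' \<subseteq> M \<or> M \<inter> M' = {})"

definition Pmax :: "'a set \<Rightarrow> ('a \<Rightarrow> 'a \<Rightarrow> 'c) \<Rightarrow> 'a set \<Rightarrow> 'a set set" where
  "Pmax V c M = {M'. strong_module V c M' \<and> M' \<subset> M \<and>
      (\<forall>M''. strong_module V c M'' \<and> M'' \<subset> M \<longrightarrow> \<not> M' \<subset> M'')}"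

text \<open>Quotient graph G[M]/Pmax(M): vertices are the maximal strong modules; the
  colour of {Ma,Mb} is the colour of an (any) edge between Ma and Mb. For |M| = 1
  it is the one-vertex graph on {M}.\<close>
definition quot_vertices :: "'a set \<Rightarrow> ('a \<Rightarrow> 'a \<Rightarrow> 'c) \<Rightarrow> 'a set \<Rightarrow> 'a set set" where
  "quot_vertices V c M = (if card M = 1 then {M} else Pmax V c M)"

definition quot_color :: "('a \<Rightarrow> 'a \<Rightarrow> 'c) \<Rightarrow> 'a set \<Rightarrow> 'a set \<Rightarrow> 'c" where
  "quot_color c X Y = c (SOME x. x \<in> X) (SOME y. y \<in> Y)"

end

theory Submission
  imports Defs
begin

(* The strong modules containing a fixed vertex form a chain, so the strong modules form a
  tree whose root is V and whose leaves are the vertices. Two distinct vertices u, v are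
  separated at their least common ancestor lca u v, where they lie in different children,
  i.e. different members of Pmax (lca u v), and c u v is the color of the quotient edge
  between these two children. Comparing children at the lca under the labelings of the
  quotients gives a linear order on V; comparing them instead under the inverse of the
  permutation of color i in each quotient gives a second linear order, and the two orders
  exhibit color class i as a permutation graph. *)

lemma strict_total_order_ranking:
  assumes "finite A"
    and irrefl: "\<And>u. u \<in> A \<Longrightarrow> \<not> R u u"
    and trans: "\<And>u v w. u \<in> A \<Longrightarrow> v \<in> A \<Longrightarrow> w \<in> A \<Longrightarrow> R u v \<Longrightarrow> R v w \<Longrightarrow> R u w"
    and total: "\<And>u v. u \<in> A \<Longrightarrow> v \<in> A \<Longrightarrow> u \<noteq> v \<Longrightarrow> R u v \<or> R v u"
  obtains r where "bij_betw r A {1..card A}" "\<And>u v. u \<in> A \<Longrightarrow> v \<in> A \<Longrightarrow> R u v \<longleftrightarrow> r u < r v"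
proof
  define r where "r u = Suc (card {w\<in>A. R w u})" for u
  have mono: "r u < r v" if "u \<in> A" "v \<in> A" "R u v" for u v
  proof -
    have "{w\<in>A. R w u} \<subset> {w\<in>A. R w v}"
      using that irrefl trans by blast
    then show ?thesis
      unfolding r_def using \<open>finite A\<close> by (simp add: psubset_card_mono)
  qed
  show iff: "R u v \<longleftrightarrow> r u < r v" if "u \<in> A" "v \<in> A" for u v
    using that mono[of u v] mono[of v u] total[of u v] by fastforce
  have "inj_on r A"
    by (rule inj_onI) (metis iff total less_irrefl)
  moreover have "r u \<in> {1..card A}" if "u \<in> A" for u
  proof -
    have "{w\<in>A. R w u} \<subset> A"
      using that irrefl by blast
    then have "card {w\<in>A. R w u} < card A"
      using \<open>finite A\<close> by (rule psubset_card_mono[rotated])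
    then show ?thesis
      by (simp add: r_def)
  qed
  ultimately show "bij_betw r A {1..card A}"
    unfolding bij_betw_def using \<open>finite A\<close>
    by (simp add: card_image card_subset_eq image_subsetI)
qed

lemma permutes_relating_bijections:
  assumes l: "bij_betw l A {1..n::nat}" and r: "bij_betw r A {1..n}"
  obtains \<pi> where "\<pi> permutes {1..n}" "\<And>u. u \<in> A \<Longrightarrow> inv \<pi> (l u) = r u"
proof
  define \<pi> where "\<pi> k = (if k \<in> {1..n} then l (inv_into A r k) else k)" for k
  have "bij_betw (l \<circ> inv_into A r) {1..n} {1..n}"
    using bij_betw_trans[OF bij_betw_inv_into[OF r] l] .
  then have "bij_betw \<pi> {1..n} {1..n}"
    by (rule bij_betw_cong[THEN iffD1, rotated]) (simp add: \<pi>_def)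
  then show \<pi>: "\<pi> permutes {1..n}"
    by (rule bij_imp_permutes) (auto simp: \<pi>_def)
  fix u assume "u \<in> A"
  then have "r u \<in> {1..n}" "inv_into A r (r u) = u"
    using r bij_betw_apply bij_betw_imp_inj_on inv_into_f_f by metis+
  then have "\<pi> (r u) = l u"
    by (simp add: \<pi>_def)
  then show "inv \<pi> (l u) = r u"
    using \<pi> by (simp add: permutes_inv_eq)
qed

lemma ce_perm_graphI:
  assumes l: "bij_betw l V {1..card V}"
    and orders: "\<And>i. i \<in> colors V c \<Longrightarrow> \<exists>r. bij_betw r V {1..card V} \<and>
        (\<forall>u\<in>V. \<forall>v\<in>V. l v < l u \<longrightarrow> (c u v = i \<longleftrightarrow> r u < r v))"
  shows "ce_perm_graph V c"
  unfolding ce_perm_graph_def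
proof (intro exI[of _ l] conjI ballI)
  fix i assume "i \<in> colors V c"
  then obtain r where r: "bij_betw r V {1..card V}"
    and color_order: "\<forall>u\<in>V. \<forall>v\<in>V. l v < l u \<longrightarrow> (c u v = i \<longleftrightarrow> r u < r v)"
    using orders by blast
  obtain \<pi> where "\<pi> permutes {1..card V}" "\<And>u. u \<in> V \<Longrightarrow> inv \<pi> (l u) = r u"
    using permutes_relating_bijections[OF l r] by blast
  with color_order show "\<exists>\<pi>. \<pi> permutes {1..card V} \<and> simple_perm_graph V (\<lambda>u v. c u v = i) l \<pi>"
    unfolding simple_perm_graph_def by auto
qed (rule l)

lemma quot_color_disjoint_modules:
  assumes sym: "\<And>u v. u \<in> V \<Longrightarrow> v \<in> V \<Longrightarrow> u \<noteq> v \<Longrightarrow> c u v = c v u"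
    and X: "is_module V c X" and Y: "is_module V c Y" and "X \<inter> Y = {}"
    and "x \<in> X" "y \<in> Y"
  shows "quot_color c X Y = c x y"
proof -
  have "c a b = c x y" if "a \<in> X" "b \<in> Y" for a b
  proof -
    have "X \<subseteq> V" "Y \<subseteq> V"
      using X Y by (auto simp: is_module_def)
    then have "c a b = c x b" "c b x = c y x"
      using X Y that \<open>X \<inter> Y = {}\<close> \<open>x \<in> X\<close> \<open>y \<in> Y\<close> unfolding is_module_def by blast+
    then show ?thesis
      using sym \<open>X \<subseteq> V\<close> \<open>Y \<subseteq> V\<close> that \<open>X \<inter> Y = {}\<close> \<open>x \<in> X\<close> \<open>y \<in> Y\<close>
      by (metis disjoint_iff subsetD)
  qed
  then show ?thesis
    unfolding quot_color_def using \<open>x \<in> X\<close> \<open>y \<in> Y\<close> by (metis someI)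
qed

locale complete_edge_colored_graph =
  fixes V :: "'a set" and c :: "'a \<Rightarrow> 'a \<Rightarrow> 'c"
  assumes complete_edge_colored: "complete_edge_colored V c"
begin

lemma finite_V: "finite V"
  and V_nonempty: "V \<noteq> {}"
  and color_sym: "\<And>u v. u \<in> V \<Longrightarrow> v \<in> V \<Longrightarrow> u \<noteq> v \<Longrightarrow> c u v = c v u"
  using complete_edge_colored unfolding complete_edge_colored_def by auto

lemma strong_module_subset: "strong_module V c M \<Longrightarrow> M \<subseteq> V"
  unfolding strong_module_def is_module_def by blast

lemma strong_modules_overlap:
  "strong_module V c M \<Longrightarrow> strong_module V c M' \<Longrightarrow> M \<inter> M' \<noteq> {} \<Longrightarrow> M \<subseteq> M' \<or> M' \<subseteq> M"
  unfolding strong_module_def by blast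

lemma strong_module_V: "strong_module V c V"
  using V_nonempty unfolding strong_module_def is_module_def by blast

lemma strong_module_singleton: "u \<in> V \<Longrightarrow> strong_module V c {u}"
  unfolding strong_module_def is_module_def by blast

lemma finite_strong_modules: "finite {M. strong_module V c M}"
  using finite_V strong_module_subset by (auto intro: finite_subset[of _ "Pow V"])

lemma Pmax_disjoint:
  assumes "X \<in> Pmax V c M" "Y \<in> Pmax V c M" "X \<noteq> Y"
  shows "X \<inter> Y = {}"
  using assms strong_modules_overlap unfolding Pmax_def by blast

definition lca :: "'a \<Rightarrow> 'a \<Rightarrow> 'a set" where
  "lca u v = \<Inter>{M. strong_module V c M \<and> u \<in> M \<and> v \<in> M}"

lemma lca_commute: "lca u v = lca v u"
  unfolding lca_def by (simp add: conj_ac)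

lemma
  assumes "u \<in> V" "v \<in> V"
  shows strong_module_lca: "strong_module V c (lca u v)"
    and lca_mem: "u \<in> lca u v" "v \<in> lca u v"
    and lca_least: "\<And>M. strong_module V c M \<Longrightarrow> u \<in> M \<Longrightarrow> v \<in> M \<Longrightarrow> lca u v \<subseteq> M"
proof -
  let ?K = "{M. strong_module V c M \<and> u \<in> M \<and> v \<in> M}"
  have "finite ?K"
    by (rule finite_subset[OF _ finite_strong_modules]) blast
  moreover have "?K \<noteq> {}"
    using assms strong_module_V by blast
  moreover have "subset.chain ?K ?K"
    unfolding subset.chain_def using strong_modules_overlap by blast
  ultimately have "lca u v \<in> ?K"
    unfolding lca_def by (rule Inter_in_chain)
  then show "strong_module V c (lca u v)" "u \<in> lca u v" "v \<in> lca u v"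
    by auto
  show "\<And>M. strong_module V c M \<Longrightarrow> u \<in> M \<Longrightarrow> v \<in> M \<Longrightarrow> lca u v \<subseteq> M"
    unfolding lca_def by blast
qed

definition child :: "'a set \<Rightarrow> 'a \<Rightarrow> 'a set" where
  "child M u = \<Union>{X. strong_module V c X \<and> u \<in> X \<and> X \<subset> M}"

lemma
  assumes "strong_module V c M" "u \<in> M" "M \<noteq> {u}"
  shows child_in_Pmax: "child M u \<in> Pmax V c M"
    and child_mem: "u \<in> child M u"
proof -
  let ?K = "{X. strong_module V c X \<and> u \<in> X \<and> X \<subset> M}"
  have "finite ?K"
    by (rule finite_subset[OF _ finite_strong_modules]) blast
  moreover have "{u} \<in> ?K"
    using assms strong_module_subset strong_module_singleton by blast
  moreover have "subset.chain ?K ?K"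
    unfolding subset.chain_def using strong_modules_overlap by blast
  ultimately have K: "child M u \<in> ?K"
    unfolding child_def by (intro Union_in_chain) auto
  then show "u \<in> child M u"
    by blast
  have "\<not> child M u \<subset> M''" if "strong_module V c M''" "M'' \<subset> M" for M''
    using that K unfolding child_def by blast
  with K show "child M u \<in> Pmax V c M"
    unfolding Pmax_def by blast
qed

lemma child_eqI:
  assumes "X \<in> Pmax V c M" "u \<in> X"
  shows "child M u = X"
proof -
  have "Y \<subseteq> X" if "strong_module V c Y" "u \<in> Y" "Y \<subset> M" for Y
    using assms that strong_modules_overlap[of X Y] unfolding Pmax_def by blast
  with assms show ?thesis
    unfolding child_def Pmax_def by blast
qed

lemma
  assumes "u \<in> V" "v \<in> V" "u \<noteq> v"
  shows lca_children_in_Pmax: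
      "child (lca u v) u \<in> Pmax V c (lca u v)" "child (lca u v) v \<in> Pmax V c (lca u v)"
    and lca_children_mem: "u \<in> child (lca u v) u" "v \<in> child (lca u v) v"
    and lca_children_distinct: "child (lca u v) u \<noteq> child (lca u v) v"
    and card_lca: "card (lca u v) \<noteq> 1"
proof -
  note lca = strong_module_lca[OF assms(1,2)] lca_mem[OF assms(1,2)]
  have nontrivial: "lca u v \<noteq> {u}" "lca u v \<noteq> {v}"
    using lca(2,3) assms(3) by auto
  note u = child_in_Pmax[OF lca(1,2) nontrivial(1)] child_mem[OF lca(1,2) nontrivial(1)]
    and v = child_in_Pmax[OF lca(1,3) nontrivial(2)] child_mem[OF lca(1,3) nontrivial(2)]
  show "child (lca u v) u \<in> Pmax V c (lca u v)" "child (lca u v) v \<in> Pmax V c (lca u v)"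
    "u \<in> child (lca u v) u" "v \<in> child (lca u v) v"
    using u v by auto
  show "child (lca u v) u \<noteq> child (lca u v) v"
  proof
    assume "child (lca u v) u = child (lca u v) v"
    moreover have "strong_module V c (child (lca u v) u)" "child (lca u v) u \<subset> lca u v"
      using u(1) unfolding Pmax_def by auto
    ultimately show False
      using lca_least[OF assms(1,2)] u(2) v(2) by auto
  qed
  show "card (lca u v) \<noteq> 1"
    using lca(2,3) assms(3) by (auto simp: card_Suc_eq)
qed

lemma quot_color_lca_children:
  assumes "u \<in> V" "v \<in> V" "u \<noteq> v"
  shows "quot_color c (child (lca u v) u) (child (lca u v) v) = c u v"
  using color_sym lca_children_in_Pmax[OF assms] lca_children_mem[OF assms]
    Pmax_disjoint[OF lca_children_in_Pmax[OF assms] lca_children_distinct[OF assms]]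
  by (intro quot_color_disjoint_modules[where V = V]) (auto simp: Pmax_def strong_module_def)

lemma lca_psubset:
  assumes "x \<in> V" "y \<in> V" "z \<in> V" "lca x y \<subset> lca y z"
  shows "lca x z = lca y z" "child (lca y z) x = child (lca y z) y"
proof -
  note xy = strong_module_lca[OF assms(1,2)] lca_mem[OF assms(1,2)]
    and yz = strong_module_lca[OF assms(2,3)] lca_mem[OF assms(2,3)]
    and xz = strong_module_lca[OF assms(1,3)] lca_mem[OF assms(1,3)]
  have "z \<notin> lca x y"
  proof
    assume "z \<in> lca x y"
    then have "lca y z \<subseteq> lca x y"
      using lca_least[OF assms(2,3) xy(1) xy(3)] by blast
    with assms(4) show False
      by blast
  qed
  then have "lca x y \<subseteq> lca x z"
    using strong_modules_overlap[OF xy(1) xz(1)] xy(2) xz(2,3) by blast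
  then have "lca x z \<subseteq> lca y z" "lca y z \<subseteq> lca x z"
    using lca_least[OF assms(1,3) yz(1)] lca_least[OF assms(2,3) xz(1)] xy(2,3) yz(3) xz(3)
      assms(4) by blast+
  then show "lca x z = lca y z"
    by (rule subset_antisym)
  have "lca y z \<noteq> {y}"
    using assms(4) xy(3) by auto
  note Y = child_in_Pmax[OF yz(1,2) this] child_mem[OF yz(1,2) this]
  have "strong_module V c (child (lca y z) y)" "\<not> child (lca y z) y \<subset> lca x y"
    using Y(1) xy(1) assms(4) unfolding Pmax_def by blast+
  then have "lca x y \<subseteq> child (lca y z) y"
    using strong_modules_overlap[OF xy(1)] xy(3) Y(2) by blast
  then show "child (lca y z) x = child (lca y z) y"
    using child_eqI[OF Y(1)] xy(2) by blast
qed

definition tree_less :: "('a set \<Rightarrow> 'a set \<Rightarrow> nat) \<Rightarrow> 'a \<Rightarrow> 'a \<Rightarrow> bool" where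
  "tree_less F u v \<longleftrightarrow>
     u \<noteq> v \<and> F (lca u v) (child (lca u v) u) < F (lca u v) (child (lca u v) v)"

definition child_labels_inj :: "('a set \<Rightarrow> 'a set \<Rightarrow> nat) \<Rightarrow> bool" where
  "child_labels_inj F \<longleftrightarrow>
     (\<forall>M. strong_module V c M \<and> card M \<noteq> 1 \<longrightarrow> inj_on (F M) (Pmax V c M))"

lemma tree_less_irrefl: "\<not> tree_less F u u"
  unfolding tree_less_def by simp

lemma tree_less_total:
  assumes "child_labels_inj F" "u \<in> V" "v \<in> V" "u \<noteq> v"
  shows "tree_less F u v \<or> tree_less F v u"
proof -
  have "F (lca u v) (child (lca u v) u) \<noteq> F (lca u v) (child (lca u v) v)"
    using assms strong_module_lca card_lca lca_children_in_Pmax lca_children_distinct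
    unfolding child_labels_inj_def inj_on_def by metis
  then show ?thesis
    unfolding tree_less_def using assms(4) lca_commute[of v u] by auto
qed

lemma tree_less_trans:
  assumes "u \<in> V" "v \<in> V" "w \<in> V" "tree_less F u v" "tree_less F v w"
  shows "tree_less F u w"
proof -
  have uv: "F (lca u v) (child (lca u v) u) < F (lca u v) (child (lca u v) v)"
    and vw: "F (lca v w) (child (lca v w) v) < F (lca v w) (child (lca v w) w)"
    using assms(4,5) unfolding tree_less_def by auto
  have "u \<noteq> w"
    using uv vw lca_commute[of u v] by auto
  have "lca u v \<subseteq> lca v w \<or> lca v w \<subseteq> lca u v"
    using strong_modules_overlap[OF strong_module_lca[OF assms(1,2)] strong_module_lca[OF assms(2,3)]]
      lca_mem(2)[OF assms(1,2)] lca_mem(1)[OF assms(2,3)] by blast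
  then consider (eq) "lca u v = lca v w" | (below) "lca u v \<subset> lca v w"
    | (above) "lca v w \<subset> lca u v"
    by blast
  then show ?thesis
  proof cases
    case eq
    have "lca u w \<subseteq> lca u v"
      using lca_least[OF assms(1,3) strong_module_lca[OF assms(1,2)] lca_mem(1)[OF assms(1,2)]]
        lca_mem(2)[OF assms(2,3)] eq by simp
    moreover have "\<not> lca u w \<subset> lca w v"
    proof
      assume "lca u w \<subset> lca w v"
      then have "child (lca w v) u = child (lca w v) w"
        using lca_psubset(2)[OF assms(1,3,2)] by blast
      then show False
        using uv vw eq lca_commute[of w v] by simp
    qed
    ultimately have "lca u w = lca u v"
      using eq lca_commute[of w v] by blast
    then show ?thesis
      unfolding tree_less_def using \<open>u \<noteq> w\<close> uv vw eq by simp
  next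
    case below
    then show ?thesis
      unfolding tree_less_def using \<open>u \<noteq> w\<close> vw lca_psubset[OF assms(1-3)] by simp
  next
    case above
    then have "lca w v \<subset> lca v u"
      by (simp add: lca_commute)
    then have "lca u w = lca u v" "child (lca u v) w = child (lca u v) v"
      using lca_psubset[OF assms(3,2,1)] lca_commute[of u w] lca_commute[of u v] by auto
    then show ?thesis
      unfolding tree_less_def using \<open>u \<noteq> w\<close> uv by simp
  qed
qed

lemma tree_less_ranking:
  assumes "child_labels_inj F"
  obtains r where "bij_betw r V {1..card V}"
    "\<And>u v. u \<in> V \<Longrightarrow> v \<in> V \<Longrightarrow> tree_less F u v \<longleftrightarrow> r u < r v"
  using strict_total_order_ranking[OF finite_V, of "tree_less F"]
    tree_less_irrefl tree_less_trans tree_less_total[OF assms] by blast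

definition quotient_witnesses ::
    "('a set \<Rightarrow> 'a set \<Rightarrow> nat) \<Rightarrow> ('a set \<Rightarrow> 'c \<Rightarrow> nat \<Rightarrow> nat) \<Rightarrow> bool" where
  "quotient_witnesses L perm \<longleftrightarrow>
     (\<forall>M. strong_module V c M \<and> card M \<noteq> 1 \<longrightarrow>
        bij_betw (L M) (Pmax V c M) {1..card (Pmax V c M)} \<and>
        (\<forall>i\<in>colors (Pmax V c M) (quot_color c).
           perm M i permutes {1..card (Pmax V c M)} \<and>
           simple_perm_graph (Pmax V c M) (\<lambda>X Y. quot_color c X Y = i) (L M) (perm M i)))"

lemma quotient_witnesses_exist:
  assumes "\<forall>M. strong_module V c M \<longrightarrow> ce_perm_graph (quot_vertices V c M) (quot_color c)"
  obtains L perm where "quotient_witnesses L perm"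
proof
  define L where "L M = (SOME l. bij_betw l (Pmax V c M) {1..card (Pmax V c M)} \<and>
      (\<forall>i\<in>colors (Pmax V c M) (quot_color c). \<exists>\<pi>. \<pi> permutes {1..card (Pmax V c M)} \<and>
         simple_perm_graph (Pmax V c M) (\<lambda>X Y. quot_color c X Y = i) l \<pi>))" for M
  define perm where "perm M i = (SOME \<pi>. \<pi> permutes {1..card (Pmax V c M)} \<and>
      simple_perm_graph (Pmax V c M) (\<lambda>X Y. quot_color c X Y = i) (L M) \<pi>)" for M i
  show "quotient_witnesses L perm"
    unfolding quotient_witnesses_def
  proof (intro allI impI)
    fix M assume M: "strong_module V c M \<and> card M \<noteq> 1"
    then have "quot_vertices V c M = Pmax V c M"
      by (simp add: quot_vertices_def)
    with M assms have "ce_perm_graph (Pmax V c M) (quot_color c)"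
      by metis
    then have "bij_betw (L M) (Pmax V c M) {1..card (Pmax V c M)} \<and>
      (\<forall>i\<in>colors (Pmax V c M) (quot_color c). \<exists>\<pi>. \<pi> permutes {1..card (Pmax V c M)} \<and>
         simple_perm_graph (Pmax V c M) (\<lambda>X Y. quot_color c X Y = i) (L M) \<pi>)"
      unfolding ce_perm_graph_def L_def by (rule someI_ex)
    then show "bij_betw (L M) (Pmax V c M) {1..card (Pmax V c M)} \<and>
        (\<forall>i\<in>colors (Pmax V c M) (quot_color c).
           perm M i permutes {1..card (Pmax V c M)} \<and>
           simple_perm_graph (Pmax V c M) (\<lambda>X Y. quot_color c X Y = i) (L M) (perm M i))"
      unfolding perm_def by (metis (no_types, lifting) someI_ex)
  qed
qed

text \<open>A quotient in which color i does not occur has no i-colored edges between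
  distinct children, so there the labeling for color i must agree with the base labeling.\<close>

definition permuted_labels ::
    "('a set \<Rightarrow> 'a set \<Rightarrow> nat) \<Rightarrow> ('a set \<Rightarrow> 'c \<Rightarrow> nat \<Rightarrow> nat) \<Rightarrow> 'c \<Rightarrow> 'a set \<Rightarrow> 'a set \<Rightarrow> nat"
  where
  "permuted_labels L perm i M X =
     (if i \<in> colors (Pmax V c M) (quot_color c) then inv (perm M i) (L M X) else L M X)"

lemma child_labels_inj_quotient_witnesses:
  "quotient_witnesses L perm \<Longrightarrow> child_labels_inj L"
  unfolding quotient_witnesses_def child_labels_inj_def by (blast dest: bij_betw_imp_inj_on)

lemma child_labels_inj_permuted_labels:
  assumes "quotient_witnesses L perm"
  shows "child_labels_inj (permuted_labels L perm i)"
  unfolding child_labels_inj_def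
proof (intro allI impI)
  fix M assume M: "strong_module V c M \<and> card M \<noteq> 1"
  then have "inj_on (L M) (Pmax V c M)"
    using child_labels_inj_quotient_witnesses[OF assms] unfolding child_labels_inj_def by blast
  moreover have "inj (inv (perm M i))" if "i \<in> colors (Pmax V c M) (quot_color c)"
    using assms M that unfolding quotient_witnesses_def by (meson permutes_inj permutes_inv)
  ultimately show "inj_on (permuted_labels L perm i M) (Pmax V c M)"
    unfolding permuted_labels_def inj_on_def by (auto split: if_splits)
qed

lemma color_iff_tree_less_permuted_labels:
  assumes "quotient_witnesses L perm" "u \<in> V" "v \<in> V" "tree_less L v u"
  shows "c u v = i \<longleftrightarrow> tree_less (permuted_labels L perm i) u v"
proof -
  have "u \<noteq> v"
    using assms(4) tree_less_irrefl by blast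
  define M where "M = lca u v"
  define Xu where "Xu = child M u"
  define Xv where "Xv = child M v"
  have children: "Xu \<in> Pmax V c M" "Xv \<in> Pmax V c M"
    and "strong_module V c M" "card M \<noteq> 1"
    using lca_children_in_Pmax strong_module_lca card_lca assms(2,3) \<open>u \<noteq> v\<close>
    unfolding M_def Xu_def Xv_def by auto
  then have perm_graph: "\<And>i. i \<in> colors (Pmax V c M) (quot_color c) \<Longrightarrow>
      simple_perm_graph (Pmax V c M) (\<lambda>X Y. quot_color c X Y = i) (L M) (perm M i)"
    using assms(1) unfolding quotient_witnesses_def by blast
  have less: "L M Xv < L M Xu"
    using assms(4) lca_commute[of v u] unfolding tree_less_def M_def Xu_def Xv_def by simp
  have color: "quot_color c Xu Xv = c u v"
    unfolding M_def Xu_def Xv_def using quot_color_lca_children assms(2,3) \<open>u \<noteq> v\<close> .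
  have tree_less_iff: "tree_less (permuted_labels L perm i) u v \<longleftrightarrow>
      permuted_labels L perm i M Xu < permuted_labels L perm i M Xv"
    unfolding tree_less_def M_def Xu_def Xv_def using \<open>u \<noteq> v\<close> by simp
  show ?thesis
  proof (cases "i \<in> colors (Pmax V c M) (quot_color c)")
    case True
    then have "quot_color c Xu Xv = i \<longleftrightarrow> inv (perm M i) (L M Xu) < inv (perm M i) (L M Xv)"
      using perm_graph children less unfolding simple_perm_graph_def by blast
    with True show ?thesis
      unfolding tree_less_iff color permuted_labels_def by simp
  next
    case False
    have "quot_color c Xu Xv \<in> colors (Pmax V c M) (quot_color c)"
      using children lca_children_distinct[OF assms(2,3) \<open>u \<noteq> v\<close>]
      unfolding colors_def M_def Xu_def Xv_def by blast
    with False less show ?thesis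
      unfolding tree_less_iff color permuted_labels_def by auto
  qed
qed

end

theorem proposition4p9:
  fixes V :: "'a set" and c :: "'a \<Rightarrow> 'a \<Rightarrow> 'c"
  assumes "complete_edge_colored V c"
    and "\<forall>M. strong_module V c M \<longrightarrow>
           ce_perm_graph (quot_vertices V c M) (quot_color c)"
  shows "ce_perm_graph V c"
proof -
  interpret complete_edge_colored_graph V c
    using assms(1) by unfold_locales
  obtain L perm where witnesses: "quotient_witnesses L perm"
    using quotient_witnesses_exist[OF assms(2)] .
  obtain l where l: "bij_betw l V {1..card V}"
    "\<And>u v. u \<in> V \<Longrightarrow> v \<in> V \<Longrightarrow> tree_less L u v \<longleftrightarrow> l u < l v"
    using tree_less_ranking[OF child_labels_inj_quotient_witnesses[OF witnesses]] by blast
  show ?thesis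
  proof (rule ce_perm_graphI[OF l(1)])
    fix i
    obtain r where r: "bij_betw r V {1..card V}"
      "\<And>u v. u \<in> V \<Longrightarrow> v \<in> V \<Longrightarrow> tree_less (permuted_labels L perm i) u v \<longleftrightarrow> r u < r v"
      using tree_less_ranking[OF child_labels_inj_permuted_labels[OF witnesses]] by blast
    have "c u v = i \<longleftrightarrow> r u < r v" if "u \<in> V" "v \<in> V" "l v < l u" for u v
      using color_iff_tree_less_permuted_labels[OF witnesses that(1,2)] l(2) r(2) that by simp
    with r(1) show "\<exists>r. bij_betw r V {1..card V} \<and>
        (\<forall>u\<in>V. \<forall>v\<in>V. l v < l u \<longrightarrow> (c u v = i \<longleftrightarrow> r u < r v))"
      by blast
  qed
qed

end
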